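(* Let $d\ge2$, $s_n=2(\log n)^2$, $s_{n,+}=(3s_n)^d$ and $W_{s_{n,+}}=[-s_{n,+}^{1/d}/2,s_{n,+}^{1/d}/2]^d$. If $\varepsilon>0$ is sufficiently small, then $$\Big|\big\{(x_0,\dots,x_3)\in W_{s_{n,+}}^4:\ |d_{23}-d_{01}|\vee|d_{03}-d_{12}|\le n^{-1+\varepsilon}\big\}\Big|\in O(n^{-1})\quad(n\to\infty),$$ where $d_{ij}=|x_i-x_j|/2$ and $|\cdot|$ denotes Lebesgue measure on $(\mathbb R^d)^4$. *)

theory Defs
  imports "HOL-Analysis.Analysis" "HOL-Library.Landau_Symbols"
begin

definition s_seq :: "nat \<Rightarrow> real" where
  "s_seq n = 2 * (ln (real n))^2"

definition s_plus :: "nat \<Rightarrow> nat \<Rightarrow> real" where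
  "s_plus d n = (3 * s_seq n) ^ d"

definition cube_W :: "real \<Rightarrow> (real ^ 'n) set" where
  "cube_W s = {x. \<forall>i. \<bar>x $ i\<bar> \<le> root CARD('n) s / 2}"

definition halfdist :: "real ^ 'n \<Rightarrow> real ^ 'n \<Rightarrow> real" where
  "halfdist x y = norm (x - y) / 2"

definition bad_set :: "nat \<Rightarrow> real \<Rightarrow> ((real^'n) \<times> (real^'n) \<times> (real^'n) \<times> (real^'n)) set" where
  "bad_set n \<epsilon> = {(x0 :: real^'n, x1 :: real^'n, x2 :: real^'n, x3 :: real^'n).
      x0 \<in> cube_W (s_plus CARD('n) n) \<and> x1 \<in> cube_W (s_plus CARD('n) n) \<and>
      x2 \<in> cube_W (s_plus CARD('n) n) \<and> x3 \<in> cube_W (s_plus CARD('n) n) \<and>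
      max \<bar>halfdist x2 x3 - halfdist x0 x1\<bar> \<bar>halfdist x0 x3 - halfdist x1 x2\<bar>
        \<le> real n powr (-1 + \<epsilon>)}"

end

theory Submission
  imports Defs
begin

(* Put s = x1 - x0 - x2 + x3. If the opposite sides of the quadrilateral x0 x1 x2 x3 have lengths
   differing by at most w, polarization shows that x1 - x0 and x2 - x0 have inner product with s
   within O(w) of |s|^2/2 and of 0 respectively. So for fixed x0 and s both x1 and x2 lie in slabs of
   width O(w/|s|) orthogonal to s, and after the substitution x3 = s - x1 + x0 + x2 the measure is
   at most (up to powers of the side length) the integral over s of min(1, w^2/|s|^2). Splitting
   s-space at the scales w^(3/5) and w^(2/5) bounds this integral by O(w^(6/5)) as soon as d >= 2.
   Here the side length is O(log^2 n) and w = 2 n^(-1+eps) <= 2 n^(-11/12), so the measure is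
   O(log^(8d) n * n^(-11/10)) = O(1/n). *)

definition cube :: "real \<Rightarrow> 'a::euclidean_space set" where
  "cube r = {x. \<forall>b\<in>Basis. \<bar>x \<bullet> b\<bar> \<le> r}"

lemma closed_cube: "closed (cube r)"
  unfolding cube_def Collect_ball_eq
  by (intro closed_INT ballI closed_Collect_le continuous_intros)

lemma cube_borel [measurable]: "cube r \<in> sets borel"
  by (simp add: closed_cube borel_closed)

lemma emeasure_cube:
  assumes "r \<ge> 0"
  shows "emeasure lborel (cube r :: 'a::euclidean_space set) = ennreal ((2 * r) ^ DIM('a))"
proof -
  have "cube r = cbox (- (r *\<^sub>R One)) (r *\<^sub>R One :: 'a)"
    unfolding cube_def cbox_def by (auto simp: abs_le_iff)
  then show ?thesis
    using assms by (simp add: emeasure_lborel_cbox_eq inner_diff_left inner_add_left)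
qed

lemma norm_diff_le_cube:
  fixes x y :: "'a::euclidean_space"
  assumes "x \<in> cube r" "y \<in> cube r"
  shows "norm (x - y) \<le> 2 * real DIM('a) * r"
proof -
  have "norm (x - y) \<le> (\<Sum>b\<in>Basis. \<bar>(x - y) \<bullet> b\<bar>)" by (rule norm_le_l1)
  also have "\<dots> \<le> (\<Sum>b\<in>(Basis::'a set). 2 * r)"
  proof (intro sum_mono)
    fix b :: 'a assume "b \<in> Basis"
    then have "\<bar>x \<bullet> b\<bar> \<le> r" "\<bar>y \<bullet> b\<bar> \<le> r" using assms by (auto simp: cube_def)
    then show "\<bar>(x - y) \<bullet> b\<bar> \<le> 2 * r" by (simp add: inner_diff_left)
  qed
  finally show ?thesis by simp
qed

lemma inner_sum_Basis_scaleR: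
  fixes f :: "'a::euclidean_space \<Rightarrow> real"
  assumes "b \<in> Basis"
  shows "(\<Sum>i\<in>Basis. f i *\<^sub>R i) \<bullet> b = f b"
  using assms by (simp add: inner_sum_left inner_Basis if_distrib cong: if_cong)

lemma sum_Basis_scaleR_in_cube_iff:
  fixes f :: "'a::euclidean_space \<Rightarrow> real"
  shows "(\<Sum>i\<in>Basis. f i *\<^sub>R i) \<in> cube r \<longleftrightarrow> (\<forall>b\<in>Basis. \<bar>f b\<bar> \<le> r)"
  by (simp add: cube_def inner_sum_Basis_scaleR)

lemma sum_Basis_scaleR_fun_upd:
  fixes f :: "'a::euclidean_space \<Rightarrow> real"
  assumes "j \<in> Basis"
  shows "(\<Sum>i\<in>Basis. (f(j := t)) i *\<^sub>R i) = (\<Sum>i\<in>Basis. (f(j := 0)) i *\<^sub>R i) + t *\<^sub>R j"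
proof -
  have "(\<Sum>i\<in>Basis. (f(j := t)) i *\<^sub>R i) = t *\<^sub>R j + (\<Sum>i\<in>Basis - {j}. f i *\<^sub>R i)" for t
    using assms by (simp add: sum.remove[OF finite_Basis assms])
  from this[of t] this[of 0] show ?thesis
    by simp
qed

interpretation lborel_product: product_sigma_finite "\<lambda>_::'a. lborel :: real measure"
  by standard

lemma emeasure_le_by_line_sections:
  fixes A :: "'a::euclidean_space set"
  assumes A [measurable]: "A \<in> sets borel" and j: "j \<in> Basis" and A_cube: "A \<subseteq> cube r"
    and "r \<ge> 0" and "L \<ge> 0"
    and sections: "\<And>p. emeasure lborel {t. p + t *\<^sub>R j \<in> A} \<le> ennreal L"
  shows "emeasure lborel A \<le> ennreal ((2 * r) ^ (DIM('a) - 1) * L)"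
proof -
  define B where "B = Basis - {j}"
  have B: "Basis = insert j B" "finite B" "j \<notin> B"
    using j by (auto simp: B_def)
  have card_B: "card B = DIM('a) - 1"
    using j by (simp add: B_def card_Diff_singleton)
  define \<Phi> where "\<Phi> = (\<lambda>f::'a \<Rightarrow> real. \<Sum>b\<in>Basis. f b *\<^sub>R b)"
  have \<Phi> [measurable]: "\<Phi> \<in> borel_measurable (Pi\<^sub>M Basis (\<lambda>_. lborel))"
    unfolding \<Phi>_def by measurable
  have "emeasure lborel A = (\<integral>\<^sup>+y. indicator A y \<partial>lborel)"
    by simp
  also have "\<dots> = (\<integral>\<^sup>+f. indicator A (\<Phi> f) \<partial>Pi\<^sub>M Basis (\<lambda>_. lborel))"
    unfolding \<Phi>_def by (subst lborel_eq, subst nn_integral_distr) (use \<Phi> in \<open>simp_all add: \<Phi>_def\<close>)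
  also have "\<dots> = (\<integral>\<^sup>+x. \<integral>\<^sup>+t. indicator A (\<Phi> (x(j := t))) \<partial>lborel \<partial>Pi\<^sub>M B (\<lambda>_. lborel))"
    unfolding B(1) by (rule lborel_product.product_nn_integral_insert[OF B(2,3)])
      (use \<Phi> in \<open>simp add: B(1)[symmetric]\<close>)
  also have "\<dots> \<le> (\<integral>\<^sup>+x. ennreal L * indicator (Pi\<^sub>E B (\<lambda>_. {-r..r})) x \<partial>Pi\<^sub>M B (\<lambda>_. lborel))"
  proof (rule nn_integral_mono)
    fix x assume x: "x \<in> space (Pi\<^sub>M B (\<lambda>_. lborel :: real measure))"
    show "(\<integral>\<^sup>+t. indicator A (\<Phi> (x(j := t))) \<partial>lborel) \<le> ennreal L * indicator (Pi\<^sub>E B (\<lambda>_. {-r..r})) x"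
    proof (cases "x \<in> Pi\<^sub>E B (\<lambda>_. {-r..r})")
      case False
      then obtain b where "b \<in> B" "\<bar>x b\<bar> > r"
        using x by (auto simp: space_PiM PiE_def Pi_def abs_le_iff)
      then have "\<Phi> (x(j := t)) \<notin> cube r" for t
        using B unfolding \<Phi>_def sum_Basis_scaleR_in_cube_iff by (metis fun_upd_other insert_iff not_le)
      then have "\<Phi> (x(j := t)) \<notin> A" for t
        using A_cube by blast
      then show ?thesis by simp
    next
      case True
      define p where "p = \<Phi> (x(j := 0))"
      have "\<Phi> (x(j := t)) = p + t *\<^sub>R j" for t
        unfolding p_def \<Phi>_def by (rule sum_Basis_scaleR_fun_upd[OF j])
      then have "(\<integral>\<^sup>+t. indicator A (\<Phi> (x(j := t))) \<partial>lborel) = (\<integral>\<^sup>+t. indicator {t. p + t *\<^sub>R j \<in> A} t \<partial>lborel)"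
        by (simp add: indicator_def)
      also have "\<dots> = emeasure lborel {t. p + t *\<^sub>R j \<in> A}"
        by (rule nn_integral_indicator) measurable
      also have "\<dots> \<le> ennreal L"
        by (rule sections)
      finally show ?thesis
        using True by simp
    qed
  qed
  also have "\<dots> = ennreal L * emeasure (Pi\<^sub>M B (\<lambda>_. lborel)) (Pi\<^sub>E B (\<lambda>_. {-r..r}))"
    by (rule nn_integral_cmult_indicator) (auto intro: sets_PiM_I_finite B(2))
  also have "\<dots> = ennreal L * ennreal ((2 * r) ^ (DIM('a) - 1))"
    using \<open>r \<ge> 0\<close> card_B by (simp add: lborel_product.emeasure_PiM B(2) ennreal_power)
  also have "\<dots> = ennreal ((2 * r) ^ (DIM('a) - 1) * L)"
    using ennreal_mult''[OF \<open>L \<ge> 0\<close>, of "(2 * r) ^ (DIM('a) - 1)"] by (simp only: mult.commute)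
  finally show ?thesis .
qed

lemma emeasure_line_slab:
  fixes p j s :: "'a::real_inner"
  assumes js: "j \<bullet> s \<noteq> 0" and "h \<ge> 0"
  shows "emeasure lborel {t. \<bar>(p + t *\<^sub>R j) \<bullet> s - c\<bar> \<le> h} = ennreal (2 * h / \<bar>j \<bullet> s\<bar>)"
proof -
  define m e where "m = (c - p \<bullet> s) / (j \<bullet> s)" and "e = h / \<bar>j \<bullet> s\<bar>"
  have "{t. \<bar>(p + t *\<^sub>R j) \<bullet> s - c\<bar> \<le> h} = {m - e .. m + e}"
  proof (intro set_eqI)
    fix t
    have "(p + t *\<^sub>R j) \<bullet> s - c = (t - m) * (j \<bullet> s)"
      using js by (simp add: m_def inner_add_left field_simps)
    then have "\<bar>(p + t *\<^sub>R j) \<bullet> s - c\<bar> \<le> h \<longleftrightarrow> \<bar>t - m\<bar> \<le> e"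
      using js by (simp add: e_def abs_mult pos_le_divide_eq)
    also have "\<dots> \<longleftrightarrow> t \<in> {m - e .. m + e}"
      by (auto simp: abs_le_iff)
    finally show "t \<in> {t. \<bar>(p + t *\<^sub>R j) \<bullet> s - c\<bar> \<le> h} \<longleftrightarrow> t \<in> {m - e .. m + e}"
      by simp
  qed
  moreover have "e \<ge> 0"
    using \<open>h \<ge> 0\<close> by (simp add: e_def)
  ultimately have "emeasure lborel {t. \<bar>(p + t *\<^sub>R j) \<bullet> s - c\<bar> \<le> h} = ennreal (m + e - (m - e))"
    by simp
  also have "m + e - (m - e) = 2 * h / \<bar>j \<bullet> s\<bar>"
    by (simp add: e_def)
  finally show ?thesis .
qed

lemma Basis_norm_le_DIM_inner:
  fixes s :: "'a::euclidean_space"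
  obtains j where "j \<in> Basis" and "norm s \<le> real DIM('a) * \<bar>j \<bullet> s\<bar>"
proof -
  have "Max ((\<lambda>b. \<bar>b \<bullet> s\<bar>) ` Basis) \<in> (\<lambda>b. \<bar>b \<bullet> s\<bar>) ` (Basis :: 'a set)"
    by (rule Max_in) auto
  then obtain j where j: "j \<in> Basis" "Max ((\<lambda>b. \<bar>b \<bullet> s\<bar>) ` Basis) = \<bar>j \<bullet> s\<bar>"
    by blast
  have "norm s \<le> (\<Sum>b\<in>Basis. \<bar>s \<bullet> b\<bar>)"
    by (rule norm_le_l1)
  also have "\<dots> \<le> (\<Sum>b\<in>(Basis :: 'a set). \<bar>j \<bullet> s\<bar>)"
  proof (intro sum_mono)
    fix b :: 'a assume "b \<in> Basis"
    then have "\<bar>b \<bullet> s\<bar> \<le> Max ((\<lambda>b. \<bar>b \<bullet> s\<bar>) ` Basis)"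
      by (intro Max.coboundedI) auto
    then show "\<bar>s \<bullet> b\<bar> \<le> \<bar>j \<bullet> s\<bar>"
      by (simp add: j(2) inner_commute)
  qed
  finally show ?thesis
    using that j(1) by simp
qed

definition cube_slab :: "real \<Rightarrow> 'a::euclidean_space \<Rightarrow> real \<Rightarrow> real \<Rightarrow> 'a set" where
  "cube_slab r s c h = {x \<in> cube r. \<bar>x \<bullet> s - c\<bar> \<le> h}"

lemma cube_slab_borel [measurable]: "cube_slab r s c h \<in> sets borel"
  unfolding cube_slab_def by measurable

lemma emeasure_cube_slab_le_cube:
  fixes s :: "'a::euclidean_space"
  assumes "r \<ge> 0"
  shows "emeasure lborel (cube_slab r s c h) \<le> ennreal ((2 * r) ^ DIM('a))"
proof -
  have "emeasure lborel (cube_slab r s c h) \<le> emeasure lborel (cube r :: 'a set)"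
    by (rule emeasure_mono) (auto simp: cube_slab_def)
  with assms show ?thesis
    by (simp add: emeasure_cube)
qed

lemma emeasure_cube_slab_le:
  fixes s :: "'a::euclidean_space"
  assumes "s \<noteq> 0" and "h \<ge> 0" and "r \<ge> 0"
  shows "emeasure lborel (cube_slab r s c h)
    \<le> ennreal ((2 * r) ^ (DIM('a) - 1) * (2 * h * real DIM('a) / norm s))"
proof -
  obtain j where j: "j \<in> Basis" and norm_s: "norm s \<le> real DIM('a) * \<bar>j \<bullet> s\<bar>"
    by (rule Basis_norm_le_DIM_inner)
  then have js: "j \<bullet> s \<noteq> 0"
    using \<open>s \<noteq> 0\<close> by auto
  have "emeasure lborel (cube_slab r s c h) \<le> ennreal ((2 * r) ^ (DIM('a) - 1) * (2 * h / \<bar>j \<bullet> s\<bar>))"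
  proof (rule emeasure_le_by_line_sections[OF cube_slab_borel j _ \<open>r \<ge> 0\<close>])
    fix p
    have "{t. \<bar>(p + t *\<^sub>R j) \<bullet> s - c\<bar> \<le> h} \<in> sets lborel"
      by measurable
    then have "emeasure lborel {t. p + t *\<^sub>R j \<in> cube_slab r s c h}
        \<le> emeasure lborel {t. \<bar>(p + t *\<^sub>R j) \<bullet> s - c\<bar> \<le> h}"
      by (intro emeasure_mono) (auto simp: cube_slab_def)
    then show "emeasure lborel {t. p + t *\<^sub>R j \<in> cube_slab r s c h} \<le> ennreal (2 * h / \<bar>j \<bullet> s\<bar>)"
      using emeasure_line_slab[OF js \<open>h \<ge> 0\<close>] by (rule ord_le_eq_trans)
  qed (use \<open>h \<ge> 0\<close> in \<open>auto simp: cube_slab_def\<close>)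
  also have "\<dots> \<le> ennreal ((2 * r) ^ (DIM('a) - 1) * (2 * h * real DIM('a) / norm s))"
  proof (intro ennreal_leI mult_left_mono)
    have "2 * h * norm s \<le> 2 * h * (real DIM('a) * \<bar>j \<bullet> s\<bar>)"
      using norm_s \<open>h \<ge> 0\<close> by (intro mult_left_mono) auto
    then show "2 * h / \<bar>j \<bullet> s\<bar> \<le> 2 * h * real DIM('a) / norm s"
      using js \<open>s \<noteq> 0\<close> by (simp add: field_simps)
  qed (use \<open>r \<ge> 0\<close> in simp)
  finally show ?thesis .
qed

lemma abs_power2_diff_le:
  fixes a b :: real
  assumes "\<bar>a - b\<bar> \<le> w" "0 \<le> a" "a \<le> M" "0 \<le> b" "b \<le> M"
  shows "\<bar>a\<^sup>2 - b\<^sup>2\<bar> \<le> 2 * M * w"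
proof -
  have "a\<^sup>2 - b\<^sup>2 = (a - b) * (a + b)"
    by (simp add: power2_eq_square algebra_simps)
  then have "\<bar>a\<^sup>2 - b\<^sup>2\<bar> = (a + b) * \<bar>a - b\<bar>"
    using assms by (simp add: abs_mult)
  also have "\<dots> \<le> 2 * M * w"
    using assms by (intro mult_mono) auto
  finally show ?thesis .
qed

lemma almost_parallelogram_slabs:
  fixes x0 x1 x2 x3 :: "'a::real_inner"
  assumes "norm (x1 - x0) \<le> M" "norm (x3 - x2) \<le> M" "norm (x3 - x0) \<le> M" "norm (x1 - x2) \<le> M"
    and "\<bar>norm (x2 - x3) - norm (x0 - x1)\<bar> \<le> w" "\<bar>norm (x0 - x3) - norm (x1 - x2)\<bar> \<le> w"
  defines "s \<equiv> x1 - x0 - x2 + x3"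
  shows "\<bar>x1 \<bullet> s - (x0 \<bullet> s + s \<bullet> s / 2)\<bar> \<le> M * w"
    and "\<bar>x2 \<bullet> s - x0 \<bullet> s\<bar> \<le> 2 * M * w"
proof -
  define u v p where "u = x1 - x0" and "v = x3 - x2" and "p = x2 - x0"
  have s: "s = u + v"
    by (simp add: s_def u_def v_def)
  have sides: "\<bar>(norm u)\<^sup>2 - (norm v)\<^sup>2\<bar> \<le> 2 * M * w"
  proof (rule abs_power2_diff_le)
    show "\<bar>norm u - norm v\<bar> \<le> w"
      using assms(5) by (simp add: u_def v_def norm_minus_commute abs_minus_commute)
  qed (use assms(1,2) in \<open>simp_all add: u_def v_def\<close>)
  have diagonals: "\<bar>(norm (p + v))\<^sup>2 - (norm (u - p))\<^sup>2\<bar> \<le> 2 * M * w"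
  proof (rule abs_power2_diff_le)
    have "p + v = x3 - x0" "u - p = x1 - x2"
      by (simp_all add: u_def v_def p_def)
    then show "\<bar>norm (p + v) - norm (u - p)\<bar> \<le> w" "norm (p + v) \<le> M" "norm (u - p) \<le> M"
      using assms(3,4,6) by (simp_all add: norm_minus_commute)
  qed simp_all
  have "x1 \<bullet> s - (x0 \<bullet> s + s \<bullet> s / 2) = u \<bullet> s - s \<bullet> s / 2"
    by (simp add: u_def inner_diff_left)
  also have "\<dots> = ((norm u)\<^sup>2 - (norm v)\<^sup>2) / 2"
    unfolding power2_norm_eq_inner s
    by (simp add: inner_add_left inner_add_right inner_commute field_simps)
  finally show "\<bar>x1 \<bullet> s - (x0 \<bullet> s + s \<bullet> s / 2)\<bar> \<le> M * w"
    using sides by simp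
  have "(norm (p + v))\<^sup>2 - (norm (u - p))\<^sup>2 = 2 * (p \<bullet> s) + ((norm v)\<^sup>2 - (norm u)\<^sup>2)"
    unfolding power2_norm_eq_inner s
    by (simp add: inner_add_left inner_add_right inner_diff_left inner_diff_right inner_commute)
  moreover have "x2 \<bullet> s - x0 \<bullet> s = p \<bullet> s"
    by (simp add: p_def inner_diff_left)
  ultimately show "\<bar>x2 \<bullet> s - x0 \<bullet> s\<bar> \<le> 2 * M * w"
    using sides diagonals by linarith
qed

lemma nn_integral_lborel_pair:
  fixes f :: "'a::euclidean_space \<times> 'b::euclidean_space \<Rightarrow> ennreal"
  assumes "f \<in> borel_measurable borel"
  shows "(\<integral>\<^sup>+z. f z \<partial>lborel) = (\<integral>\<^sup>+x. \<integral>\<^sup>+y. f (x, y) \<partial>lborel \<partial>lborel)"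
proof -
  have "f \<in> borel_measurable (lborel \<Otimes>\<^sub>M lborel)"
    using assms by (simp add: lborel_prod)
  then show ?thesis
    by (simp only: lborel_prod[symmetric] lborel.nn_integral_fst)
qed

lemma nn_integral_lborel_translate:
  fixes f :: "'a::euclidean_space \<Rightarrow> ennreal"
  assumes [measurable]: "f \<in> borel_measurable borel"
  shows "(\<integral>\<^sup>+x. f (c + x) \<partial>lborel) = (\<integral>\<^sup>+x. f x \<partial>lborel)"
proof -
  have "(\<integral>\<^sup>+x. f x \<partial>lborel) = (\<integral>\<^sup>+x. f x \<partial>distr lborel borel ((+) c))"
    by (simp add: lborel_distr_plus)
  also have "\<dots> = (\<integral>\<^sup>+x. f (c + x) \<partial>lborel)"
    by (subst nn_integral_distr) auto
  finally show ?thesis ..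
qed

lemma nn_integral_lborel_4:
  fixes g :: "'a::euclidean_space \<times> 'b::euclidean_space \<times> 'c::euclidean_space \<times> 'd::euclidean_space \<Rightarrow> ennreal"
  assumes [measurable]: "g \<in> borel_measurable borel"
  shows "(\<integral>\<^sup>+z. g z \<partial>lborel) = (\<integral>\<^sup>+x0. \<integral>\<^sup>+x1. \<integral>\<^sup>+x2. \<integral>\<^sup>+x3. g (x0, x1, x2, x3) \<partial>lborel \<partial>lborel \<partial>lborel \<partial>lborel)"
proof -
  have "(\<integral>\<^sup>+z. g z \<partial>lborel) = (\<integral>\<^sup>+x0. \<integral>\<^sup>+y. g (x0, y) \<partial>lborel \<partial>lborel)"
    by (rule nn_integral_lborel_pair) measurable
  also have "\<dots> = (\<integral>\<^sup>+x0. \<integral>\<^sup>+x1. \<integral>\<^sup>+y. g (x0, x1, y) \<partial>lborel \<partial>lborel \<partial>lborel)"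
    by (intro nn_integral_cong nn_integral_lborel_pair) measurable
  also have "\<dots> = (\<integral>\<^sup>+x0. \<integral>\<^sup>+x1. \<integral>\<^sup>+x2. \<integral>\<^sup>+x3. g (x0, x1, x2, x3) \<partial>lborel \<partial>lborel \<partial>lborel \<partial>lborel)"
    by (intro nn_integral_cong nn_integral_lborel_pair) measurable
  finally show ?thesis .
qed

lemma nn_integral_lborel_shear:
  fixes \<Psi> :: "'a::euclidean_space \<times> 'a \<times> 'a \<times> 'a \<Rightarrow> ennreal"
  assumes \<Psi>: "\<Psi> \<in> borel_measurable borel"
  shows "(\<integral>\<^sup>+(x0, x1, x2, x3). \<Psi> (x0, x1, x2, x1 - x0 - x2 + x3) \<partial>lborel)
    = (\<integral>\<^sup>+x0. \<integral>\<^sup>+s. \<integral>\<^sup>+x1. \<integral>\<^sup>+x2. \<Psi> (x0, x1, x2, s) \<partial>lborel \<partial>lborel \<partial>lborel \<partial>lborel)"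
proof -
  have [measurable]: "\<Psi> \<in> borel_measurable (borel \<Otimes>\<^sub>M (borel \<Otimes>\<^sub>M (borel \<Otimes>\<^sub>M borel)))"
    using \<Psi> by (simp only: borel_prod)
  have "(\<lambda>(x0, x1, x2, x3). \<Psi> (x0, x1, x2, x1 - x0 - x2 + x3)) \<in> borel_measurable borel"
    unfolding borel_prod[symmetric] by measurable
  from nn_integral_lborel_4[OF this]
  have "(\<integral>\<^sup>+(x0, x1, x2, x3). \<Psi> (x0, x1, x2, x1 - x0 - x2 + x3) \<partial>lborel)
      = (\<integral>\<^sup>+x0. \<integral>\<^sup>+x1. \<integral>\<^sup>+x2. \<integral>\<^sup>+x3. \<Psi> (x0, x1, x2, x1 - x0 - x2 + x3) \<partial>lborel \<partial>lborel \<partial>lborel \<partial>lborel)"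
    by simp
  also have "\<dots> = (\<integral>\<^sup>+x0. \<integral>\<^sup>+x1. \<integral>\<^sup>+x2. \<integral>\<^sup>+s. \<Psi> (x0, x1, x2, s) \<partial>lborel \<partial>lborel \<partial>lborel \<partial>lborel)"
    using nn_integral_lborel_translate[of "\<lambda>s. \<Psi> (_, _, _, s)"] by simp
  also have "\<dots> = (\<integral>\<^sup>+x0. \<integral>\<^sup>+x1. \<integral>\<^sup>+s. \<integral>\<^sup>+x2. \<Psi> (x0, x1, x2, s) \<partial>lborel \<partial>lborel \<partial>lborel \<partial>lborel)"
    by (simp add: lborel_pair.Fubini'[where f = "\<lambda>x2 s. \<Psi> (_, _, x2, s)"])
  also have "\<dots> = (\<integral>\<^sup>+x0. \<integral>\<^sup>+s. \<integral>\<^sup>+x1. \<integral>\<^sup>+x2. \<Psi> (x0, x1, x2, s) \<partial>lborel \<partial>lborel \<partial>lborel \<partial>lborel)"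
    by (simp add: lborel_pair.Fubini'[where f = "\<lambda>x1 s. \<integral>\<^sup>+x2. \<Psi> (_, x1, x2, s) \<partial>lborel"])
  finally show ?thesis .
qed

definition almost_parallelograms :: "real \<Rightarrow> real \<Rightarrow> ('a::euclidean_space \<times> 'a \<times> 'a \<times> 'a) set" where
  "almost_parallelograms r w = {(x0, x1, x2, x3).
     x0 \<in> cube r \<and> x1 \<in> cube r \<and> x2 \<in> cube r \<and> x3 \<in> cube r \<and>
     \<bar>norm (x2 - x3) - norm (x0 - x1)\<bar> \<le> w \<and> \<bar>norm (x0 - x3) - norm (x1 - x2)\<bar> \<le> w}"

lemma almost_parallelograms_borel [measurable]: "almost_parallelograms r w \<in> sets borel"
proof -
  have "almost_parallelograms r w = {z \<in> space (borel \<Otimes>\<^sub>M (borel \<Otimes>\<^sub>M (borel \<Otimes>\<^sub>M borel))).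
     fst z \<in> cube r \<and> fst (snd z) \<in> cube r \<and> fst (snd (snd z)) \<in> cube r \<and> snd (snd (snd z)) \<in> cube r \<and>
     \<bar>norm (fst (snd (snd z)) - snd (snd (snd z))) - norm (fst z - fst (snd z))\<bar> \<le> w \<and>
     \<bar>norm (fst z - snd (snd (snd z))) - norm (fst (snd z) - fst (snd (snd z)))\<bar> \<le> w}"
    by (auto simp: almost_parallelograms_def space_pair_measure)
  also have "\<dots> \<in> sets (borel \<Otimes>\<^sub>M (borel \<Otimes>\<^sub>M (borel \<Otimes>\<^sub>M borel)))"
    by measurable
  finally show ?thesis
    by (simp only: borel_prod)
qed

lemma shear_mem_cube:
  assumes "x0 \<in> cube r" "x1 \<in> cube r" "x2 \<in> cube r" "x3 \<in> cube r"
  shows "x1 - x0 - x2 + x3 \<in> cube (4 * r)"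
  unfolding cube_def mem_Collect_eq
proof (intro ballI)
  fix b :: 'a assume "b \<in> Basis"
  then have "\<bar>x0 \<bullet> b\<bar> \<le> r" "\<bar>x1 \<bullet> b\<bar> \<le> r" "\<bar>x2 \<bullet> b\<bar> \<le> r" "\<bar>x3 \<bullet> b\<bar> \<le> r"
    using assms by (auto simp: cube_def)
  then show "\<bar>(x1 - x0 - x2 + x3) \<bullet> b\<bar> \<le> 4 * r"
    by (simp add: inner_add_left inner_diff_left)
qed

lemma almost_parallelograms_in_slabs:
  fixes x0 x1 x2 x3 :: "'a::euclidean_space"
  assumes "(x0, x1, x2, x3) \<in> almost_parallelograms r w"
  defines "s \<equiv> x1 - x0 - x2 + x3" and "h \<equiv> 2 * real DIM('a) * r * w"
  shows "x0 \<in> cube r" and "s \<in> cube (4 * r)"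
    and "x1 \<in> cube_slab r s (x0 \<bullet> s + s \<bullet> s / 2) h" and "x2 \<in> cube_slab r s (x0 \<bullet> s) (2 * h)"
proof -
  have cubes: "x0 \<in> cube r" "x1 \<in> cube r" "x2 \<in> cube r" "x3 \<in> cube r"
    and sides: "\<bar>norm (x2 - x3) - norm (x0 - x1)\<bar> \<le> w" "\<bar>norm (x0 - x3) - norm (x1 - x2)\<bar> \<le> w"
    using assms(1) by (auto simp: almost_parallelograms_def)
  note slabs = almost_parallelogram_slabs[OF norm_diff_le_cube norm_diff_le_cube
      norm_diff_le_cube norm_diff_le_cube sides, OF cubes(2,1) cubes(4,3) cubes(4,1) cubes(2,3)]
  show "x0 \<in> cube r" "s \<in> cube (4 * r)"
    using cubes shear_mem_cube[OF cubes] by (simp_all add: s_def)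
  show "x1 \<in> cube_slab r s (x0 \<bullet> s + s \<bullet> s / 2) h" "x2 \<in> cube_slab r s (x0 \<bullet> s) (2 * h)"
    using cubes slabs by (simp_all add: cube_slab_def s_def h_def mult.assoc)
qed

lemma nn_integral_cmult_indicator_indicator:
  assumes "A \<in> sets M" and "B \<in> sets N"
  shows "(\<integral>\<^sup>+x. \<integral>\<^sup>+y. c * indicator A x * indicator B y \<partial>N \<partial>M) = c * (emeasure M A * emeasure N B)"
proof -
  have "(\<integral>\<^sup>+x. \<integral>\<^sup>+y. c * indicator A x * indicator B y \<partial>N \<partial>M) = (\<integral>\<^sup>+x. c * indicator A x * emeasure N B \<partial>M)"
    using assms(2) by (simp add: nn_integral_cmult_indicator)
  also have "\<dots> = (\<integral>\<^sup>+x. c * indicator A x \<partial>M) * emeasure N B"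
    by (rule nn_integral_multc) (use assms(1) in simp)
  finally show ?thesis
    using assms(1) by (simp add: nn_integral_cmult_indicator mult.assoc)
qed

lemma emeasure_almost_parallelograms_le_nn_integral:
  fixes r w :: real
  defines "h \<equiv> 2 * real DIM('a::euclidean_space) * r * w"
  shows "emeasure lborel (almost_parallelograms r w :: ('a \<times> 'a \<times> 'a \<times> 'a) set)
    \<le> (\<integral>\<^sup>+x0. \<integral>\<^sup>+s. indicator (cube r :: 'a set) x0 * indicator (cube (4 * r) :: 'a set) s *
          (emeasure lborel (cube_slab r s (x0 \<bullet> s + s \<bullet> s / 2) h) *
           emeasure lborel (cube_slab r s (x0 \<bullet> s) (2 * h))) \<partial>lborel \<partial>lborel)"
proof -
  define \<Psi> where "\<Psi> = (\<lambda>(x0, x1, x2, s :: 'a).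
    indicator (cube r) x0 * indicator (cube (4 * r)) s *
    indicator (cube_slab r s (x0 \<bullet> s + s \<bullet> s / 2) h) x1 * indicator (cube_slab r s (x0 \<bullet> s) (2 * h)) x2 :: ennreal)"
  have \<Psi>_borel: "\<Psi> \<in> borel_measurable borel"
    unfolding \<Psi>_def cube_slab_def borel_prod[symmetric] by measurable
  have pointwise: "indicator (almost_parallelograms r w) (x0, x1, x2, x3) \<le> \<Psi> (x0, x1, x2, x1 - x0 - x2 + x3)"
    for x0 x1 x2 x3 :: 'a
    using almost_parallelograms_in_slabs[of x0 x1 x2 x3 r w]
    by (cases "(x0, x1, x2, x3) \<in> almost_parallelograms r w") (simp_all add: \<Psi>_def h_def)
  have "emeasure lborel (almost_parallelograms r w :: ('a \<times> 'a \<times> 'a \<times> 'a) set)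
      = (\<integral>\<^sup>+z. indicator (almost_parallelograms r w :: ('a \<times> 'a \<times> 'a \<times> 'a) set) z \<partial>lborel)"
    by simp
  also have "\<dots> \<le> (\<integral>\<^sup>+(x0, x1, x2, x3). \<Psi> (x0, x1, x2, x1 - x0 - x2 + x3) \<partial>lborel)"
    using pointwise by (intro nn_integral_mono) auto
  also have "\<dots> = (\<integral>\<^sup>+x0. \<integral>\<^sup>+s. \<integral>\<^sup>+x1. \<integral>\<^sup>+x2. \<Psi> (x0, x1, x2, s) \<partial>lborel \<partial>lborel \<partial>lborel \<partial>lborel)"
    by (rule nn_integral_lborel_shear[OF \<Psi>_borel])
  also have "\<dots> = (\<integral>\<^sup>+x0. \<integral>\<^sup>+s. indicator (cube r :: 'a set) x0 * indicator (cube (4 * r) :: 'a set) s *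
          (emeasure lborel (cube_slab r s (x0 \<bullet> s + s \<bullet> s / 2) h) *
           emeasure lborel (cube_slab r s (x0 \<bullet> s) (2 * h))) \<partial>lborel \<partial>lborel)"
    by (simp add: \<Psi>_def nn_integral_cmult_indicator_indicator)
  finally show ?thesis .
qed

lemma emeasure_cube_slab_pair_le:
  fixes s :: "'a::euclidean_space"
  assumes "0 < \<sigma>" and "\<sigma> \<le> norm s" and "r \<ge> 0" and "w \<ge> 0"
  defines "h \<equiv> 2 * real DIM('a) * r * w"
  shows "emeasure lborel (cube_slab r s c1 h) * emeasure lborel (cube_slab r s c2 (2 * h))
    \<le> ennreal ((2 * r) ^ (2 * DIM('a)) * (8 * real DIM('a) ^ 4 * w\<^sup>2 / \<sigma>\<^sup>2))"
proof -
  define D where "D = real DIM('a)"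
  define A where "A = (2 * r) ^ (DIM('a) - 1)"
  have "s \<noteq> 0" "h \<ge> 0" "A \<ge> 0"
    using assms by (auto simp: h_def A_def)
  have "emeasure lborel (cube_slab r s c1 h) * emeasure lborel (cube_slab r s c2 (2 * h))
      \<le> ennreal (A * (2 * h * D / norm s)) * ennreal (A * (2 * (2 * h) * D / norm s))"
    unfolding A_def D_def using assms \<open>s \<noteq> 0\<close> \<open>h \<ge> 0\<close> by (intro mult_mono emeasure_cube_slab_le) auto
  also have "\<dots> = ennreal (A * (2 * h * D / norm s) * (A * (2 * (2 * h) * D / norm s)))"
    using \<open>h \<ge> 0\<close> \<open>A \<ge> 0\<close> by (intro ennreal_mult[symmetric]) (auto simp: D_def)
  also have "A * (2 * h * D / norm s) * (A * (2 * (2 * h) * D / norm s))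
      = (A * A * (2 * r)\<^sup>2) * (8 * D ^ 4 * w\<^sup>2 / (norm s)\<^sup>2)"
    using \<open>s \<noteq> 0\<close> by (simp add: h_def D_def field_simps power2_eq_square power4_eq_xxxx)
  also have "A * A * (2 * r)\<^sup>2 = (2 * r) ^ (2 * DIM('a))"
  proof -
    have "2 * DIM('a) = (DIM('a) - 1) + (DIM('a) - 1) + 2"
      using DIM_positive[where 'a='a] by linarith
    then show ?thesis
      unfolding A_def by (metis power_add)
  qed
  also have "8 * D ^ 4 * w\<^sup>2 / (norm s)\<^sup>2 \<le> 8 * D ^ 4 * w\<^sup>2 / \<sigma>\<^sup>2"
    using assms by (intro divide_left_mono power_mono mult_pos_pos) auto
  finally show ?thesis
    using \<open>r \<ge> 0\<close> by (simp add: D_def ennreal_leI mult_left_mono)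
qed

lemma norm_gt_of_notin_cube:
  fixes s :: "'a::euclidean_space"
  assumes "s \<notin> cube \<sigma>"
  shows "\<sigma> < norm s"
proof -
  obtain b :: 'a where "b \<in> Basis" "\<sigma> < \<bar>s \<bullet> b\<bar>"
    using assms by (auto simp: cube_def not_le)
  then show ?thesis
    using Basis_le_norm[of b s] by linarith
qed

lemma emeasure_cube_slab_pair_le_step:
  fixes s :: "'a::euclidean_space"
  assumes "r \<ge> 0" and "w \<ge> 0" and "0 < \<sigma>1" and "0 < \<sigma>2" and "s \<in> cube (4 * r)"
  defines "K \<equiv> 8 * real DIM('a) ^ 4 * w\<^sup>2" and "h \<equiv> 2 * real DIM('a) * r * w"
  shows "emeasure lborel (cube_slab r s c1 h) * emeasure lborel (cube_slab r s c2 (2 * h))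
    \<le> ennreal ((2 * r) ^ (2 * DIM('a))) *
      (indicator (cube \<sigma>1) s + ennreal (K / \<sigma>1\<^sup>2) * indicator (cube \<sigma>2) s
        + ennreal (K / \<sigma>2\<^sup>2) * indicator (cube (4 * r)) s)"
    (is "?P \<le> ennreal ?V * ?H")
proof -
  have "K \<ge> 0" "?V \<ge> 0"
    using \<open>r \<ge> 0\<close> by (simp_all add: K_def)
  have H_ge: "ennreal c \<le> ?H"
    if "s \<in> cube \<sigma>1 \<and> c = 1 \<or> s \<in> cube \<sigma>2 \<and> c = K / \<sigma>1\<^sup>2 \<or> c = K / \<sigma>2\<^sup>2" for c
    using that \<open>s \<in> cube (4 * r)\<close> by (auto simp: add_increasing add_increasing2)
  have pair_le: "?P \<le> ennreal (?V * (K / \<sigma>\<^sup>2))" if "0 < \<sigma>" "s \<notin> cube \<sigma>" for \<sigma>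
    using emeasure_cube_slab_pair_le[OF that(1) less_imp_le[OF norm_gt_of_notin_cube[OF that(2)]]
        \<open>r \<ge> 0\<close> \<open>w \<ge> 0\<close>]
    by (simp add: K_def h_def)
  obtain c where "c \<ge> 0" "?P \<le> ennreal (?V * c)" "ennreal c \<le> ?H"
  proof (cases "s \<in> cube \<sigma>1")
    case True
    have "?P \<le> ennreal ((2 * r) ^ DIM('a)) * ennreal ((2 * r) ^ DIM('a))"
      using \<open>r \<ge> 0\<close> by (intro mult_mono emeasure_cube_slab_le_cube) auto
    also have "\<dots> = ennreal ((2 * r) ^ DIM('a) * (2 * r) ^ DIM('a))"
      using \<open>r \<ge> 0\<close> by (intro ennreal_mult[symmetric]) simp_all
    also have "(2 * r) ^ DIM('a) * (2 * r) ^ DIM('a) = ?V * 1"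
      by (simp add: power_even_eq power2_eq_square)
    finally show ?thesis
      using True H_ge[of 1] by (intro that[of 1]) simp_all
  next
    case not_\<sigma>1: False
    show ?thesis
    proof (cases "s \<in> cube \<sigma>2")
      case True
      then show ?thesis
        using pair_le[OF \<open>0 < \<sigma>1\<close> not_\<sigma>1] H_ge[of "K / \<sigma>1\<^sup>2"] \<open>K \<ge> 0\<close>
        by (intro that[of "K / \<sigma>1\<^sup>2"]) simp_all
    next
      case False
      then show ?thesis
        using pair_le[OF \<open>0 < \<sigma>2\<close> False] H_ge[of "K / \<sigma>2\<^sup>2"] \<open>K \<ge> 0\<close>
        by (intro that[of "K / \<sigma>2\<^sup>2"]) simp_all
    qed
  qed
  have "?P \<le> ennreal ?V * ennreal c"
    using \<open>?P \<le> ennreal (?V * c)\<close> \<open>c \<ge> 0\<close> \<open>?V \<ge> 0\<close> by (simp add: ennreal_mult)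
  also have "\<dots> \<le> ennreal ?V * ?H"
    using \<open>ennreal c \<le> ?H\<close> by (rule mult_left_mono) simp
  finally show ?thesis .
qed

lemma nn_integral_cube_steps:
  fixes a b c \<sigma>1 \<sigma>2 \<rho> :: real
  assumes "a \<ge> 0" "b \<ge> 0" "c \<ge> 0" "\<sigma>1 \<ge> 0" "\<sigma>2 \<ge> 0" "\<rho> \<ge> 0"
  shows "(\<integral>\<^sup>+s. ennreal a * indicator (cube \<sigma>1 :: 'a::euclidean_space set) s + ennreal b * indicator (cube \<sigma>2) s
      + ennreal c * indicator (cube \<rho>) s \<partial>lborel)
    = ennreal (a * (2 * \<sigma>1) ^ DIM('a) + b * (2 * \<sigma>2) ^ DIM('a) + c * (2 * \<rho>) ^ DIM('a))"
  using assms
  by (simp add: nn_integral_add nn_integral_cmult_indicator emeasure_cube ennreal_mult)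

theorem emeasure_almost_parallelograms_le:
  fixes r w \<sigma>1 \<sigma>2 :: real
  assumes r: "r \<ge> 0" and w: "w \<ge> 0" and \<sigma>: "0 < \<sigma>1" "0 < \<sigma>2"
  defines "D \<equiv> DIM('a::euclidean_space)" and "K \<equiv> 8 * real DIM('a) ^ 4 * w\<^sup>2"
  shows "emeasure lborel (almost_parallelograms r w :: ('a \<times> 'a \<times> 'a \<times> 'a) set)
    \<le> ennreal ((2 * r) ^ (3 * D) * ((2 * \<sigma>1) ^ D + K / \<sigma>1\<^sup>2 * (2 * \<sigma>2) ^ D + K / \<sigma>2\<^sup>2 * (8 * r) ^ D))"
proof -
  define h where "h = 2 * real DIM('a) * r * w"
  define V where "V = (2 * r) ^ (2 * D)"
  define Y where "Y = (2 * \<sigma>1) ^ D + K / \<sigma>1\<^sup>2 * (2 * \<sigma>2) ^ D + K / \<sigma>2\<^sup>2 * (8 * r) ^ D"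
  have "Y \<ge> 0"
    using r \<sigma> by (simp add: Y_def K_def)
  define H :: "'a \<Rightarrow> ennreal" where "H s = ennreal 1 * indicator (cube \<sigma>1) s + ennreal (K / \<sigma>1\<^sup>2) * indicator (cube \<sigma>2) s
      + ennreal (K / \<sigma>2\<^sup>2) * indicator (cube (4 * r)) s" for s
  have H_borel: "H \<in> borel_measurable borel"
    unfolding H_def by measurable
  have fibre: "indicator (cube (4 * r)) s *
      (emeasure lborel (cube_slab r s (x0 \<bullet> s + s \<bullet> s / 2) h) * emeasure lborel (cube_slab r s (x0 \<bullet> s) (2 * h)))
    \<le> ennreal V * H s" for x0 s :: 'a
    using emeasure_cube_slab_pair_le_step[OF r w \<sigma>, of s] by (cases "s \<in> cube (4 * r)") (simp_all add: H_def V_def D_def K_def h_def)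
  have "emeasure lborel (almost_parallelograms r w :: ('a \<times> 'a \<times> 'a \<times> 'a) set)
      \<le> (\<integral>\<^sup>+x0. \<integral>\<^sup>+s. indicator (cube r :: 'a set) x0 * indicator (cube (4 * r) :: 'a set) s *
          (emeasure lborel (cube_slab r s (x0 \<bullet> s + s \<bullet> s / 2) h) *
           emeasure lborel (cube_slab r s (x0 \<bullet> s) (2 * h))) \<partial>lborel \<partial>lborel)"
    unfolding h_def by (rule emeasure_almost_parallelograms_le_nn_integral)
  also have "\<dots> \<le> (\<integral>\<^sup>+x0. \<integral>\<^sup>+s. indicator (cube r :: 'a set) x0 * (ennreal V * H s) \<partial>lborel \<partial>lborel)"
    by (intro nn_integral_mono) (simp add: mult.assoc mult_left_mono fibre)
  also have "\<dots> = (\<integral>\<^sup>+x0. (ennreal V * integral\<^sup>N lborel H) * indicator (cube r :: 'a set) x0 \<partial>lborel)"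
  proof (intro nn_integral_cong)
    fix x0 :: 'a
    have "(\<integral>\<^sup>+s. indicator (cube r) x0 * (ennreal V * H s) \<partial>lborel) = indicator (cube r) x0 * (\<integral>\<^sup>+s. ennreal V * H s \<partial>lborel)"
      by (rule nn_integral_cmult) (use H_borel in measurable)
    also have "(\<integral>\<^sup>+s. ennreal V * H s \<partial>lborel) = ennreal V * integral\<^sup>N lborel H"
      by (rule nn_integral_cmult) (use H_borel in simp)
    finally show "(\<integral>\<^sup>+s. indicator (cube r) x0 * (ennreal V * H s) \<partial>lborel) = (ennreal V * integral\<^sup>N lborel H) * indicator (cube r) x0"
      by (simp only: mult.commute)
  qed
  also have "\<dots> = ennreal V * integral\<^sup>N lborel H * emeasure lborel (cube r :: 'a set)"
    by (rule nn_integral_cmult_indicator) simp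
  also have "emeasure lborel (cube r :: 'a set) = ennreal ((2 * r) ^ D)"
    using \<open>r \<ge> 0\<close> by (simp add: emeasure_cube D_def)
  also have "integral\<^sup>N lborel H = ennreal Y"
    unfolding H_def Y_def D_def using r w \<sigma> by (subst nn_integral_cube_steps) (simp_all add: K_def)
  also have "ennreal V * ennreal Y * ennreal ((2 * r) ^ D) = ennreal (V * Y * (2 * r) ^ D)"
    using r \<open>Y \<ge> 0\<close> by (simp add: ennreal_mult''[symmetric])
  also have "V * Y * (2 * r) ^ D = (2 * r) ^ (3 * D) * Y"
    unfolding V_def by (simp add: ac_simps flip: power_add)
  finally show ?thesis
    by (simp add: Y_def)
qed

lemma cube_vec_eq: "cube r = {x :: real ^ 'n. \<forall>i. \<bar>x $ i\<bar> \<le> r}"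
  unfolding cube_def by (fastforce simp: Basis_vec_def cart_eq_inner_axis)

lemma cube_W_s_plus: "cube_W (s_plus CARD('n) n) = (cube (3 * (ln (real n))\<^sup>2) :: (real ^ 'n) set)"
proof -
  have "root CARD('n) (s_plus CARD('n) n) = 3 * s_seq n"
    unfolding s_plus_def s_seq_def by (rule real_root_power_cancel) auto
  then show ?thesis
    unfolding cube_W_def cube_vec_eq by (simp add: s_seq_def)
qed

lemma bad_set_subset_almost_parallelograms:
  assumes "\<epsilon> \<le> 1 / 12" and "n \<ge> 1"
  shows "bad_set n \<epsilon> \<subseteq> almost_parallelograms (3 * (ln (real n))\<^sup>2) (2 * real n powr (-11 / 12))"
proof (clarify)
  fix x0 x1 x2 x3 :: "real ^ 'n"
  assume "(x0, x1, x2, x3) \<in> bad_set n \<epsilon>"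
  then have cubes: "x0 \<in> cube (3 * (ln (real n))\<^sup>2)" "x1 \<in> cube (3 * (ln (real n))\<^sup>2)"
      "x2 \<in> cube (3 * (ln (real n))\<^sup>2)" "x3 \<in> cube (3 * (ln (real n))\<^sup>2)"
    and sides: "max \<bar>halfdist x2 x3 - halfdist x0 x1\<bar> \<bar>halfdist x0 x3 - halfdist x1 x2\<bar> \<le> real n powr (-1 + \<epsilon>)"
    unfolding bad_set_def cube_W_s_plus by auto
  have "real n powr (-1 + \<epsilon>) \<le> real n powr (-11 / 12)"
    using assms by (intro powr_mono) auto
  with sides have "\<bar>norm (x2 - x3) - norm (x0 - x1)\<bar> \<le> 2 * real n powr (-11 / 12)"
      "\<bar>norm (x0 - x3) - norm (x1 - x2)\<bar> \<le> 2 * real n powr (-11 / 12)"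
    unfolding halfdist_def by (auto simp: abs_le_iff)
  with cubes show "(x0, x1, x2, x3) \<in> almost_parallelograms (3 * (ln (real n))\<^sup>2) (2 * real n powr (-11 / 12))"
    by (simp add: almost_parallelograms_def)
qed

lemma three_scale_sum_le:
  fixes t \<rho> :: real and d :: nat
  assumes t: "0 < t" "t \<le> 1" and d: "2 \<le> d" and \<rho>: "1 \<le> \<rho>"
  defines "K \<equiv> 8 * real d ^ 4 * (t ^ 5)\<^sup>2"
  shows "(\<rho> / 4) ^ (3 * d) * ((2 * (t ^ 3 / 2)) ^ d + K / (t ^ 3 / 2)\<^sup>2 * (2 * (t ^ 2 / 2)) ^ d
      + K / (t ^ 2 / 2)\<^sup>2 * \<rho> ^ d)
    \<le> 65 * real d ^ 4 * \<rho> ^ (4 * d) * t ^ 6"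
proof -
  have "t ^ a \<le> t ^ b" if "b \<le> a" for a b
    using t that by (intro power_decreasing) auto
  then have small: "(t ^ 3) ^ d \<le> t ^ 6" "(t ^ 2) ^ d * t ^ 4 \<le> t ^ 6"
    using d by (simp_all flip: power_mult power_add)
  have "1 \<le> real d ^ 4" "1 \<le> \<rho> ^ d"
    using d \<rho> by (simp_all add: one_le_power)
  have "(2 * (t ^ 3 / 2)) ^ d + K / (t ^ 3 / 2)\<^sup>2 * (2 * (t ^ 2 / 2)) ^ d + K / (t ^ 2 / 2)\<^sup>2 * \<rho> ^ d
      = (t ^ 3) ^ d + 32 * real d ^ 4 * ((t ^ 2) ^ d * t ^ 4) + 32 * real d ^ 4 * \<rho> ^ d * t ^ 6"
    using t by (simp add: K_def field_simps power2_eq_square eval_nat_numeral)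
  also have "\<dots> \<le> t ^ 6 + 32 * real d ^ 4 * t ^ 6 + 32 * real d ^ 4 * \<rho> ^ d * t ^ 6"
    using small \<rho> by (intro add_mono mult_left_mono) auto
  also have "\<dots> = (1 + 32 * real d ^ 4 + 32 * (real d ^ 4 * \<rho> ^ d)) * t ^ 6"
    by (simp add: algebra_simps)
  also have "\<dots> \<le> 65 * (real d ^ 4 * \<rho> ^ d) * t ^ 6"
  proof (rule mult_right_mono)
    have "real d ^ 4 * 1 \<le> real d ^ 4 * \<rho> ^ d"
      using \<open>1 \<le> \<rho> ^ d\<close> by (intro mult_left_mono) auto
    then show "1 + 32 * real d ^ 4 + 32 * (real d ^ 4 * \<rho> ^ d) \<le> 65 * (real d ^ 4 * \<rho> ^ d)"
      using \<open>1 \<le> real d ^ 4\<close> by linarith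
  qed (use t in simp)
  finally have sum: "(2 * (t ^ 3 / 2)) ^ d + K / (t ^ 3 / 2)\<^sup>2 * (2 * (t ^ 2 / 2)) ^ d + K / (t ^ 2 / 2)\<^sup>2 * \<rho> ^ d
      \<le> 65 * (real d ^ 4 * \<rho> ^ d) * t ^ 6" .
  have "(\<rho> / 4) ^ (3 * d) \<le> \<rho> ^ (3 * d)"
    using \<rho> by (intro power_mono) auto
  moreover have "0 \<le> (2 * (t ^ 3 / 2)) ^ d + K / (t ^ 3 / 2)\<^sup>2 * (2 * (t ^ 2 / 2)) ^ d + K / (t ^ 2 / 2)\<^sup>2 * \<rho> ^ d"
    using t \<rho> by (simp add: K_def)
  ultimately have "(\<rho> / 4) ^ (3 * d) * ((2 * (t ^ 3 / 2)) ^ d + K / (t ^ 3 / 2)\<^sup>2 * (2 * (t ^ 2 / 2)) ^ d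
      + K / (t ^ 2 / 2)\<^sup>2 * \<rho> ^ d) \<le> \<rho> ^ (3 * d) * (65 * (real d ^ 4 * \<rho> ^ d) * t ^ 6)"
    using sum \<rho> by (intro mult_mono) auto
  also have "\<rho> ^ (3 * d) * (65 * (real d ^ 4 * \<rho> ^ d) * t ^ 6) = 65 * real d ^ 4 * \<rho> ^ (4 * d) * t ^ 6"
    by (simp add: ac_simps flip: power_add)
  finally show ?thesis .
qed

lemma ln_power_le_powr:
  fixes x a :: real
  assumes "1 \<le> x" and "0 < a"
  shows "ln x ^ k \<le> (real k / a) ^ k * x powr a"
proof (cases "k = 0")
  case False
  have "ln x \<le> x powr (a / k) / (a / k)"
    using assms False by (intro ln_powr_bound) auto
  then have "ln x ^ k \<le> (x powr (a / k) / (a / k)) ^ k"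
    using assms by (intro power_mono) auto
  also have "\<dots> = (real k / a) ^ k * x powr a"
    using assms False by (simp add: power_divide powr_power field_simps)
  finally show ?thesis .
qed (use assms in \<open>simp add: ge_one_powr_ge_zero\<close>)

lemma ln_power_mult_powr_bigo:
  fixes k :: nat and a :: real
  assumes "0 < a"
  shows "(\<lambda>n::nat. ln (real n) ^ k * real n powr (-1 - a)) \<in> O(\<lambda>n. 1 / real n)"
proof (rule bigoI[where c = "(real k / a) ^ k"])
  show "\<forall>\<^sub>F n in sequentially. norm (ln (real n) ^ k * real n powr (-1 - a)) \<le> (real k / a) ^ k * norm (1 / real n)"
    unfolding eventually_sequentially
  proof (intro exI[of _ 1] allI impI)
    fix n :: nat assume "1 \<le> n"
    then have "ln (real n) ^ k * real n powr (-1 - a) \<le> (real k / a) ^ k * real n powr a * real n powr (-1 - a)"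
      using ln_power_le_powr[of "real n" a k] assms by (intro mult_right_mono) auto
    also have "\<dots> = (real k / a) ^ k * (1 / real n)"
      using \<open>1 \<le> n\<close> by (simp add: mult.assoc flip: powr_add)
    finally show "norm (ln (real n) ^ k * real n powr (-1 - a)) \<le> (real k / a) ^ k * norm (1 / real n)"
      using \<open>1 \<le> n\<close> by simp
  qed
qed

lemma measure_bad_set_le:
  assumes d: "CARD('n::finite) \<ge> 2" and "\<epsilon> \<le> 1 / 12" and n: "n \<ge> 4"
  shows "measure lborel (bad_set n \<epsilon> :: ((real ^ 'n) \<times> (real ^ 'n) \<times> (real ^ 'n) \<times> (real ^ 'n)) set)
    \<le> 65 * real CARD('n) ^ 4 * 24 ^ (4 * CARD('n)) * 2 powr (6 / 5)
      * (ln (real n) ^ (8 * CARD('n)) * real n powr (-1 - 1 / 10))"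
proof -
  define d where "d = CARD('n)"
  define L where "L = ln (real n)"
  define r w where "r = 3 * L\<^sup>2" and "w = 2 * real n powr (-11 / 12)"
  define t where "t = w powr (1 / 5)"
  \<comment> \<open>The scales t^3/2 and t^2/2 (with t^5 = w) make all three terms of the splitting of order w^(6/5).\<close>
  have "exp 1 \<le> real n"
    using exp_le n by linarith
  then have "1 \<le> L"
    unfolding L_def using ln_mono[of "exp 1" "real n"] by auto
  have "2 \<le> real n powr (1 / 2)"
    using n by (simp add: powr_half_sqrt real_le_rsqrt)
  also have "\<dots> \<le> real n powr (11 / 12)"
    using n by (intro powr_mono) auto
  finally have "0 < w" "w \<le> 1"
    using n by (auto simp: w_def powr_minus field_simps)
  have t: "0 < t" "t \<le> 1" "t ^ 5 = w" "t ^ 6 = 2 powr (6 / 5) * real n powr (-11 / 10)"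
    using \<open>0 < w\<close> \<open>w \<le> 1\<close> by (simp_all add: t_def powr_le1 powr_powr flip: powr_realpow)
      (use n in \<open>simp add: w_def powr_mult powr_powr\<close>)
  let ?K = "8 * real d ^ 4 * w\<^sup>2"
  have "emeasure lborel (bad_set n \<epsilon> :: ((real ^ 'n) \<times> (real ^ 'n) \<times> (real ^ 'n) \<times> (real ^ 'n)) set)
      \<le> emeasure lborel (almost_parallelograms r w :: ((real ^ 'n) \<times> (real ^ 'n) \<times> (real ^ 'n) \<times> (real ^ 'n)) set)"
    using bad_set_subset_almost_parallelograms[OF \<open>\<epsilon> \<le> 1 / 12\<close>, of n] n
    by (intro emeasure_mono) (simp_all add: r_def w_def L_def)
  also have "\<dots> \<le> ennreal ((2 * r) ^ (3 * d) * ((2 * (t ^ 3 / 2)) ^ d + ?K / (t ^ 3 / 2)\<^sup>2 * (2 * (t ^ 2 / 2)) ^ d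
      + ?K / (t ^ 2 / 2)\<^sup>2 * (8 * r) ^ d))"
    using emeasure_almost_parallelograms_le[where 'a = "real ^ 'n", of r w "t ^ 3 / 2" "t ^ 2 / 2"] \<open>0 < w\<close> t
    by (simp add: r_def d_def)
  also have "\<dots> \<le> ennreal (65 * real d ^ 4 * (8 * r) ^ (4 * d) * t ^ 6)"
  proof (intro ennreal_leI)
    have "1 \<le> L\<^sup>2"
      using \<open>1 \<le> L\<close> by (simp add: one_le_power)
    then have "1 \<le> 8 * r"
      by (simp add: r_def)
    have "2 \<le> d"
      using d by (simp add: d_def)
    show "(2 * r) ^ (3 * d) * ((2 * (t ^ 3 / 2)) ^ d + ?K / (t ^ 3 / 2)\<^sup>2 * (2 * (t ^ 2 / 2)) ^ d
        + ?K / (t ^ 2 / 2)\<^sup>2 * (8 * r) ^ d) \<le> 65 * real d ^ 4 * (8 * r) ^ (4 * d) * t ^ 6"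
      using three_scale_sum_le[OF t(1,2) \<open>2 \<le> d\<close> \<open>1 \<le> 8 * r\<close>] by (simp add: t(3))
  qed
  finally have "measure lborel (bad_set n \<epsilon> :: ((real ^ 'n) \<times> (real ^ 'n) \<times> (real ^ 'n) \<times> (real ^ 'n)) set)
      \<le> 65 * real d ^ 4 * (8 * r) ^ (4 * d) * t ^ 6"
    unfolding measure_def using t by (intro enn2real_leI) (auto simp: r_def)
  also have "(8 * r) ^ (4 * d) = 24 ^ (4 * d) * L ^ (8 * d)"
    by (simp add: r_def power_mult_distrib flip: power_mult)
  finally show ?thesis
    using t by (simp add: d_def L_def ac_simps)
qed

theorem mainTheorem9:
  assumes "CARD('n::finite) \<ge> 2"
  shows "\<exists>\<epsilon>0>0. \<forall>\<epsilon>. 0 < \<epsilon> \<and> \<epsilon> < \<epsilon>0 \<longrightarrow>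
    (\<lambda>n. measure lborel (bad_set n \<epsilon> :: ((real^'n) \<times> (real^'n) \<times> (real^'n) \<times> (real^'n)) set))
      \<in> O(\<lambda>n. 1 / real n)"
proof (intro exI[of _ "1 / 12"] conjI allI impI)
  fix \<epsilon> :: real
  assume "0 < \<epsilon> \<and> \<epsilon> < 1 / 12"
  define k where "k = 8 * CARD('n)"
  have "(\<lambda>n. measure lborel (bad_set n \<epsilon> :: ((real^'n) \<times> (real^'n) \<times> (real^'n) \<times> (real^'n)) set))
      \<in> O(\<lambda>n. ln (real n) ^ k * real n powr (-1 - 1 / 10))"
  proof (rule bigoI)
    show "\<forall>\<^sub>F n in sequentially. norm (measure lborel (bad_set n \<epsilon> :: ((real^'n) \<times> (real^'n) \<times> (real^'n) \<times> (real^'n)) set))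
        \<le> 65 * real CARD('n) ^ 4 * 24 ^ (4 * CARD('n)) * 2 powr (6 / 5) * norm (ln (real n) ^ k * real n powr (-1 - 1 / 10))"
      using eventually_ge_at_top[of 4]
    proof eventually_elim
      case (elim n)
      then show ?case
        using measure_bad_set_le[OF assms, of \<epsilon> n] \<open>0 < \<epsilon> \<and> \<epsilon> < 1 / 12\<close> by (simp add: k_def)
    qed
  qed
  also have "(\<lambda>n. ln (real n) ^ k * real n powr (-1 - 1 / 10)) \<in> O(\<lambda>n. 1 / real n)"
    by (rule ln_power_mult_powr_bigo) simp
  finally show "(\<lambda>n. measure lborel (bad_set n \<epsilon> :: ((real^'n) \<times> (real^'n) \<times> (real^'n) \<times> (real^'n)) set))
      \<in> O(\<lambda>n. 1 / real n)" .
qed simp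

end
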